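(* If $N = q^k n^2$ is an odd perfect number given in Eulerian form, then $q < n\sqrt{3}$.
   Context: For a positive integer $x$, $\sigma(x)$ denotes the sum of the positive divisors of $x$. A positive integer $N$ is perfect if $\sigma(N) = 2N$. An odd perfect number $N$ is said to be given in Eulerian form if $N = q^k n^2$ where $q$ is a prime, $q \equiv k \equiv 1 \pmod 4$, $n$ is a positive integer, and $\gcd(q,n) = 1$. *)

theory Defs
  imports Complex_Main "HOL-Computational_Algebra.Primes"
begin

definition sigma :: "nat \<Rightarrow> nat" where
  "sigma x = (\<Sum>d\<in>{d. d dvd x}. d)"

definition perfect :: "nat \<Rightarrow> bool" where
  "perfect N \<longleftrightarrow> N > 0 \<and> sigma N = 2 * N"

definition eulerian_form :: "nat \<Rightarrow> nat \<Rightarrow> nat \<Rightarrow> nat \<Rightarrow> bool" where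
  "eulerian_form N q k n \<longleftrightarrow> N = q ^ k * n ^ 2 \<and> prime q \<and> q mod 4 = 1 \<and> k mod 4 = 1
     \<and> n > 0 \<and> coprime q n"

end

theory Submission
  imports Defs
begin

text \<open>
  Multiplicativity turns perfection into \<open>\<sigma>(q\<^sup>k) \<sigma>(n\<^sup>2) = 2 q\<^sup>k n\<^sup>2\<close>.
  If \<open>k > 1\<close>, then \<open>q\<^sup>k\<close> is coprime to \<open>\<sigma>(q\<^sup>k)\<close>, so it divides
  \<open>\<sigma>(n\<^sup>2)\<close>; hence \<open>q\<^sup>2 < \<sigma>(q\<^sup>k) \<le> 2 n\<^sup>2\<close>.
  If \<open>k = 1\<close>, then \<open>q\<close> divides \<open>\<sigma>(n\<^sup>2)\<close>, hence \<open>\<sigma>(p\<^sup>j) = q s\<close> for some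
  odd prime power \<open>p\<^sup>j\<close> exactly dividing \<open>n\<^sup>2 = p\<^sup>j u\<close>, and
  \<open>(q + 1) s \<sigma>(u) = 2 p\<^sup>j u\<close>. Let \<open>g = gcd(q + 1, p\<^sup>j) = p\<^sup>c\<close>. Since
  \<open>\<sigma>(p\<^sup>j) \<equiv> 1 + p + \<dots> + p\<^bsup>c-1\<^esub> (mod g)\<close> and \<open>g\<close> divides \<open>(q + 1) s = \<sigma>(p\<^sup>j) + s\<close>,
  one gets \<open>g < 2 s\<close> and \<open>p\<close> does not divide \<open>s\<close>. Cancelling \<open>g\<close> from the equation and
  using coprimality of \<open>(q + 1)/g\<close> and \<open>p\<^sup>j/g\<close> gives \<open>2 u = ((q + 1)/g) w\<close> and
  \<open>s \<sigma>(u) = (p\<^sup>j/g) w\<close> with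
  \<open>s\<close> dividing \<open>w\<close>, so \<open>g \<le> s w\<close> and \<open>p\<^sup>j \<le> s\<^sup>2 \<sigma>(u)\<close>. Together with \<open>2 \<sigma>(p\<^sup>j) < 3 p\<^sup>j\<close> this gives
  \<open>2 q < 3 s \<sigma>(u)\<close>, and multiplying by \<open>q + 1\<close> gives \<open>q\<^sup>2 < 3 p\<^sup>j u = 3 n\<^sup>2\<close>.
\<close>

lemma sigma_pos: "x > 0 \<Longrightarrow> sigma x > 0"
  unfolding sigma_def by (metis finite_divisors_nat gr0I member_le_sum mem_Collect_eq
      one_dvd not_one_le_zero zero_le)

lemma sigma_mult:
  assumes "coprime a b" "a > 0" "b > 0"
  shows "sigma (a * b) = sigma a * sigma b"
proof -
  let ?A = "{d. d dvd a}" and ?B = "{d. d dvd b}"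
  have divisors: "{d. d dvd a * b} = (\<lambda>(x, y). x * y) ` (?A \<times> ?B)"
    by (auto intro: mult_dvd_mono dest: division_decomp)
  have "inj_on (\<lambda>(x, y). x * y) (?A \<times> ?B)"
  proof (rule inj_onI, clarsimp)
    fix x y x' y' :: nat
    assume dvd: "x dvd a" "y dvd b" "x' dvd a" "y' dvd b" and eq: "x * y = x' * y'"
    have "coprime x y'" "coprime x' y"
      using dvd assms(1) coprime_divisors by blast+
    with eq show "x = x' \<and> y = y'"
      by (simp add: coprime_crossproduct_nat)
  qed
  then have "sigma (a * b) = (\<Sum>(x, y)\<in>?A \<times> ?B. x * y)"
    unfolding sigma_def divisors by (simp add: sum.reindex)
  also have "\<dots> = sigma a * sigma b"
    unfolding sigma_def sum_product sum.cartesian_product ..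
  finally show ?thesis .
qed

lemma sigma_prod_coprime:
  assumes "finite A" "\<And>x. x \<in> A \<Longrightarrow> f x > 0"
    and "pairwise (\<lambda>x y. coprime (f x) (f y)) A"
  shows "sigma (\<Prod>x\<in>A. f x) = (\<Prod>x\<in>A. sigma (f x))"
  using assms
proof (induction A rule: finite_induct)
  case empty
  then show ?case by (simp add: sigma_def)
next
  case (insert x A)
  have "coprime (f x) (\<Prod>y\<in>A. f y)"
    using insert.hyps(2) insert.prems(2) by (intro prod_coprime_right) (auto simp: pairwise_def)
  then show ?case
    using insert by (simp add: sigma_mult pairwise_insert)
qed

lemma sigma_prime_factorization:
  assumes "x > 0"
  shows "sigma x = (\<Prod>p\<in>prime_factors x. sigma (p ^ multiplicity p x))"
proof -
  have pairwise_coprime: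
    "pairwise (\<lambda>p p'. coprime (p ^ multiplicity p x) (p' ^ multiplicity p' x)) (prime_factors x)"
    unfolding pairwise_def
    by (metis coprime_power_left_iff coprime_power_right_iff in_prime_factors_imp_prime primes_coprime)
  have "sigma (\<Prod>p\<in>prime_factors x. p ^ multiplicity p x)
      = (\<Prod>p\<in>prime_factors x. sigma (p ^ multiplicity p x))"
    by (rule sigma_prod_coprime[OF finite_set_mset _ pairwise_coprime])
      (simp add: prime_gt_0_nat in_prime_factors_imp_prime)
  then show ?thesis
    using prime_factorization_nat[OF assms] by simp
qed

lemma prime_dvd_sigma_obtains_prime_power:
  assumes "prime q" "x > 0" "q dvd sigma x"
  obtains p j y where "prime p" "j \<ge> 1" "x = p ^ j * y" "coprime (p ^ j) y"
    "q dvd sigma (p ^ j)"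
proof -
  have "q dvd (\<Prod>p\<in>prime_factors x. sigma (p ^ multiplicity p x))"
    using assms(3) unfolding sigma_prime_factorization[OF assms(2)] .
  then have "\<exists>p\<in>prime_factors x. q dvd sigma (p ^ multiplicity p x)"
    by (rule prime_dvd_prod_iff[OF finite_set_mset assms(1), THEN iffD1])
  then obtain p where p: "p \<in> prime_factors x" and q_dvd: "q dvd sigma (p ^ multiplicity p x)" ..
  have p_prime: "prime p"
    using p by (rule in_prime_factors_imp_prime)
  then have "x \<noteq> 0" "\<not> is_unit p"
    using assms(2) by (auto simp: not_prime_unit)
  then obtain y where x: "x = p ^ multiplicity p x * y" and "\<not> p dvd y"
    by (rule multiplicity_decompose')
  then have "coprime (p ^ multiplicity p x) y"
    using p_prime by (simp add: prime_imp_coprime)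
  moreover have "multiplicity p x \<ge> 1"
    using p by (simp add: prime_factors_multiplicity Suc_le_eq)
  ultimately show ?thesis
    using that p_prime x q_dvd by blast
qed

lemma sigma_prime_power:
  assumes "prime p"
  shows "sigma (p ^ j) = (\<Sum>i\<le>j. p ^ i)"
proof -
  have "{d. d dvd p ^ j} = (\<lambda>i. p ^ i) ` {..j}"
    using divides_primepow_nat[OF assms] by auto
  moreover have "inj_on (\<lambda>i. p ^ i) {..j}"
    using assms prime_gt_1_nat by (auto intro!: inj_onI)
  ultimately show ?thesis
    unfolding sigma_def by (simp add: sum.reindex)
qed

lemma geometric_sum_nat: "(m::nat) * (\<Sum>i<c. (m + 1) ^ i) + 1 = (m + 1) ^ c"
proof (induction c)
  case 0
  then show ?case by simp
next
  case (Suc c)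
  have "m * (\<Sum>i<Suc c. (m + 1) ^ i) + 1 = (m * (\<Sum>i<c. (m + 1) ^ i) + 1) + m * (m + 1) ^ c"
    by (simp add: algebra_simps)
  also have "\<dots> = (m + 1) ^ Suc c"
    using Suc.IH by simp
  finally show ?case .
qed

lemma geometric_sum_lt:
  assumes "3 \<le> (p::nat)"
  shows "2 * (\<Sum>i<c. p ^ i) < p ^ c"
proof -
  define m where "m = p - 1"
  then have p: "p = m + 1" and "2 \<le> m"
    using assms by simp_all
  then have "2 * (\<Sum>i<c. p ^ i) \<le> m * (\<Sum>i<c. p ^ i)"
    by (intro mult_right_mono) auto
  then show ?thesis
    using geometric_sum_nat[of m c, folded p] by linarith
qed

lemma not_dvd_geometric_sum:
  assumes "p \<noteq> (1::nat)" "c > 0"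
  shows "\<not> p dvd (\<Sum>i<c. p ^ i)"
proof -
  obtain c' where "c = Suc c'"
    using assms(2) gr0_implies_Suc by blast
  then have "(\<Sum>i<c. p ^ i) = p * (\<Sum>i<c'. p ^ i) + 1"
    by (simp only: sum.lessThan_Suc_shift) (simp add: sum_distrib_left)
  then show ?thesis
    using assms(1) by (metis dvd_add_right_iff dvd_triv_left nat_dvd_1_iff_1)
qed

lemma geometric_sum_split:
  assumes "c \<le> j"
  obtains R where "(\<Sum>i\<le>j. (p::nat) ^ i) = (\<Sum>i<c. p ^ i) + p ^ c * R"
proof -
  have "{..j} = {..<c} \<union> {c..j}"
    using assms by auto
  then have "(\<Sum>i\<le>j. p ^ i) = (\<Sum>i<c. p ^ i) + (\<Sum>i\<in>{c..j}. p ^ i)"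
    by (simp add: sum.union_disjoint ivl_disj_int)
  moreover have "p ^ c dvd (\<Sum>i\<in>{c..j}. p ^ i)"
    by (intro dvd_sum) (auto simp: le_imp_power_dvd)
  ultimately show ?thesis
    using that by (auto simp: dvd_def)
qed

lemma sigma_prime_power_lt:
  assumes "prime p" "3 \<le> p"
  shows "2 * sigma (p ^ j) < 3 * p ^ j"
proof -
  have "sigma (p ^ j) = (\<Sum>i<j. p ^ i) + p ^ j"
    using sigma_prime_power[OF assms(1)] by (simp add: lessThan_Suc_atMost[symmetric])
  then show ?thesis
    using geometric_sum_lt[OF assms(2), of j] by linarith
qed

lemma prime_power_dvd_sigma_add:
  assumes p: "prime p" "3 \<le> p" and g: "g dvd p ^ j" "1 < g"
    and g_dvd: "g dvd sigma (p ^ j) + s"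
  shows "g < 2 * s" and "\<not> p dvd s"
proof -
  obtain c where c: "c \<le> j" "g = p ^ c"
    using g(1) divides_primepow_nat[OF p(1)] by blast
  with g(2) have "c > 0"
    by (cases c) auto
  define T where "T = (\<Sum>i<c. p ^ i)"
  obtain R where "sigma (p ^ j) = T + g * R"
    using geometric_sum_split[OF c(1)] sigma_prime_power[OF p(1)] c(2) unfolding T_def by metis
  with g_dvd have "g dvd (T + s) + R * g"
    by (simp add: ac_simps)
  then have T_s: "g dvd T + s"
    by simp
  have T: "\<not> p dvd T"
    unfolding T_def using p(1) \<open>c > 0\<close> by (intro not_dvd_geometric_sum) auto
  then have "g \<le> T + s"
    using T_s by (intro dvd_imp_le) (auto intro: gr0I)
  moreover have "2 * T < g"
    unfolding T_def c(2) using p(2) by (rule geometric_sum_lt)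
  ultimately show "g < 2 * s"
    by linarith
  have "p dvd g"
    using c(2) \<open>c > 0\<close> by simp
  then have "p dvd T + s"
    using T_s by (rule dvd_trans)
  with T show "\<not> p dvd s"
    using dvd_add_left_iff by blast
qed

lemma prime_power_le_cofactor_sq_mul:
  fixes p j q s u v :: nat
  assumes p: "prime p" "3 \<le> p" and sigma_eq: "sigma (p ^ j) = q * s"
    and eq: "(q + 1) * s * v = 2 * p ^ j * u" and "u > 0"
  shows "p ^ j \<le> s * s * v"
proof -
  define g where "g = gcd (q + 1) (p ^ j)"
  define B where "B = (q + 1) div g"
  define C where "C = p ^ j div g"
  have "g > 0"
    unfolding g_def using p(1) prime_gt_0_nat by simp
  have q1: "q + 1 = g * B" and A: "p ^ j = g * C"
    unfolding B_def C_def g_def by simp_all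
  have "coprime B C"
    unfolding B_def C_def g_def by (rule div_gcd_coprime) simp
  have "g * (B * s * v) = g * (2 * C * u)"
    using eq unfolding q1 A by (simp add: ac_simps)
  then have "C * (2 * u) = B * (s * v)"
    using \<open>g > 0\<close> by (simp add: ac_simps)
  then have "B dvd C * (2 * u)"
    by simp
  then have "B dvd 2 * u"
    using \<open>coprime B C\<close> by (simp add: coprime_dvd_mult_right_iff)
  then obtain w where w: "2 * u = B * w" ..
  have "B > 0" "w > 0"
    using q1 w \<open>u > 0\<close> by (auto intro: gr0I)
  have "B * (C * w) = B * (s * v)"
    using \<open>C * (2 * u) = B * (s * v)\<close> w by (metis mult.left_commute)
  then have sv: "s * v = C * w"
    using \<open>B > 0\<close> by simp
  have "q * s > 0"
    using sigma_pos[of "p ^ j"] p(1) sigma_eq by (simp add: prime_gt_0_nat)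
  then have "s > 0"
    by simp
  have "g \<le> s * w"
  proof (cases "g = 1")
    case True
    then show ?thesis
      using \<open>s > 0\<close> \<open>w > 0\<close> by (simp add: Suc_le_eq)
  next
    case False
    have "sigma (p ^ j) + s = g * (B * s)"
      using sigma_eq by (simp add: mult.assoc[symmetric] q1[symmetric])
    then have "g dvd sigma (p ^ j) + s"
      by simp
    moreover have "g dvd p ^ j" "1 < g"
      using A False \<open>g > 0\<close> by simp_all
    ultimately have g_lt: "g < 2 * s" and "\<not> p dvd s"
      using prime_power_dvd_sigma_add[OF p] by blast+
    then have "coprime s (p ^ j)"
      using p(1) by (simp add: prime_imp_coprime coprime_commute)
    then have "coprime s C"
      unfolding A by simp
    moreover have "s dvd C * w"
      using sv by (metis dvd_triv_left)
    ultimately have "s dvd w"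
      by (simp add: coprime_dvd_mult_right_iff)
    then have "s \<le> w"
      using \<open>w > 0\<close> by (rule dvd_imp_le)
    moreover have "2 \<le> s"
      using g_lt \<open>1 < g\<close> by linarith
    ultimately have "2 * s \<le> s * w"
      using mult_le_mono[of 2 w s s] by (simp add: mult.commute)
    then show ?thesis
      using g_lt by linarith
  qed
  then have "g * C \<le> s * w * C"
    by simp
  then show ?thesis
    unfolding A by (simp add: sv ac_simps)
qed

lemma sq_lt_of_sigma_prime_power_eq:
  fixes p j q s u v :: nat
  assumes p: "prime p" "3 \<le> p" and sigma_eq: "sigma (p ^ j) = q * s"
    and eq: "(q + 1) * s * v = 2 * p ^ j * u" and "u > 0"
  shows "q ^ 2 < 3 * (p ^ j * u)"
proof -
  have "q * s > 0"
    using sigma_pos[of "p ^ j"] p(1) sigma_eq by (simp add: prime_gt_0_nat)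
  then have "s > 0"
    by simp
  have "s * (2 * q) = 2 * sigma (p ^ j)"
    using sigma_eq by simp
  also have "\<dots> < 3 * p ^ j"
    using p by (rule sigma_prime_power_lt)
  also have "\<dots> \<le> s * (3 * s * v)"
    using prime_power_le_cofactor_sq_mul[OF assms] by simp
  finally have "2 * q < 3 * s * v"
    by simp
  then have "2 * q * (q + 1) < 3 * s * v * (q + 1)"
    by (intro mult_strict_right_mono) auto
  also have "\<dots> = 3 * ((q + 1) * s * v)"
    by (simp only: ac_simps)
  also have "\<dots> = 3 * (2 * p ^ j * u)"
    unfolding eq ..
  finally show ?thesis
    by (simp add: power2_eq_square algebra_simps)
qed

lemma prime_sq_lt_of_sigma_prime_mult_eq:
  assumes q: "prime q" and "odd m" and eq: "(q + 1) * sigma m = 2 * q * m"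
  shows "q ^ 2 < 3 * m"
proof -
  have "m > 0"
    using \<open>odd m\<close> by (rule odd_pos)
  have "coprime q (q + 1)"
    by simp
  moreover have "q dvd (q + 1) * sigma m"
    using eq by simp
  ultimately have "q dvd sigma m"
    using coprime_dvd_mult_right_iff by blast
  then obtain p j u where p: "prime p" "j \<ge> 1" and m: "m = p ^ j * u"
    and cop: "coprime (p ^ j) u" and "q dvd sigma (p ^ j)"
    using prime_dvd_sigma_obtains_prime_power[OF q \<open>m > 0\<close>] by blast
  then obtain s where s: "sigma (p ^ j) = q * s"
    by blast
  have "p dvd m"
    using m p(2) by simp
  then have "odd p"
    using \<open>odd m\<close> by (auto intro: dvd_trans)
  then have "3 \<le> p"
    using prime_ge_2_nat[OF p(1)] by presburger
  have "u > 0"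
    using m \<open>m > 0\<close> by (auto intro: gr0I)
  have "sigma m = q * (s * sigma u)"
    using m cop s p(1) \<open>u > 0\<close> by (simp add: sigma_mult prime_gt_0_nat)
  then have "q * ((q + 1) * s * sigma u) = (q + 1) * sigma m"
    by (simp only: ac_simps)
  also have "\<dots> = 2 * q * m"
    by (rule eq)
  also have "\<dots> = q * (2 * p ^ j * u)"
    unfolding m by (simp only: ac_simps)
  finally have "(q + 1) * s * sigma u = 2 * p ^ j * u"
    using prime_gt_0_nat[OF q] by (simp only: mult_left_cancel neq0_conv)
  from sq_lt_of_sigma_prime_power_eq[OF p(1) \<open>3 \<le> p\<close> s this \<open>u > 0\<close>]
  show ?thesis
    using m by simp
qed

lemma prime_sq_lt_of_sigma_prime_power_mult_eq:
  assumes q: "prime q" and "2 \<le> k" and "m > 0"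
    and eq: "sigma (q ^ k) * sigma m = 2 * q ^ k * m"
  shows "q ^ 2 < 2 * m"
proof -
  have "q \<noteq> 1"
    using q by auto
  then have "\<not> q dvd sigma (q ^ k)"
    using not_dvd_geometric_sum[of q "Suc k"] sigma_prime_power[OF q]
    by (simp add: lessThan_Suc_atMost)
  then have "coprime (q ^ k) (sigma (q ^ k))"
    using q by (simp add: prime_imp_coprime)
  moreover have "q ^ k dvd sigma (q ^ k) * sigma m"
    using eq by simp
  ultimately have "q ^ k dvd sigma m"
    by (simp add: coprime_dvd_mult_right_iff)
  then have "q ^ k \<le> sigma m"
    using sigma_pos[OF \<open>m > 0\<close>] by (rule dvd_imp_le)
  then have "sigma (q ^ k) * q ^ k \<le> (2 * m) * q ^ k"
    using eq by (metis mult.commute mult.left_commute mult_le_mono2)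
  then have "sigma (q ^ k) \<le> 2 * m"
    using q prime_gt_0_nat by simp
  moreover have "q ^ 2 \<le> q ^ k"
    using \<open>2 \<le> k\<close> prime_ge_1_nat[OF q] by (rule power_increasing)
  moreover have "(\<Sum>i\<in>{0, k}. q ^ i) \<le> sigma (q ^ k)"
    unfolding sigma_prime_power[OF q] by (intro sum_mono2) auto
  then have "1 + q ^ k \<le> sigma (q ^ k)"
    using \<open>2 \<le> k\<close> by simp
  ultimately show ?thesis
    by simp
qed

theorem lemma3:
  fixes N q k n :: nat
  assumes "odd N" and "perfect N" and "eulerian_form N q k n"
  shows "real q < real n * sqrt 3"
proof -
  have N: "N = q ^ k * n ^ 2" and q: "prime q" and "k mod 4 = 1" and "n > 0"
    and "coprime q n"
    using assms(3) unfolding eulerian_form_def by auto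
  have "odd (n ^ 2)"
    using \<open>odd N\<close> N by simp
  have eq: "sigma (q ^ k) * sigma (n ^ 2) = 2 * q ^ k * n ^ 2"
    using assms(2) N \<open>coprime q n\<close> \<open>n > 0\<close> prime_gt_0_nat[OF q]
    by (simp add: perfect_def sigma_mult)
  have "q ^ 2 < 3 * n ^ 2"
  proof (cases "k = 1")
    case True
    then show ?thesis
      using prime_sq_lt_of_sigma_prime_mult_eq[OF q \<open>odd (n ^ 2)\<close>] eq sigma_prime_power[OF q, of 1]
      by simp
  next
    case False
    then have "2 \<le> k"
      using \<open>k mod 4 = 1\<close> by presburger
    then show ?thesis
      using prime_sq_lt_of_sigma_prime_power_mult_eq[OF q _ _ eq] \<open>n > 0\<close> by simp
  qed
  then have "real q < sqrt (3 * real n ^ 2)"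
    by (intro real_less_rsqrt) (simp flip: of_nat_power)
  then show ?thesis
    by (simp add: real_sqrt_mult mult.commute)
qed

end
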